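(* Let $\mathcal{I}$ be a proper admissible ideal on $\omega$ and let $X$ be a zero-dimensional Lindel\"of space. Then $X$ has the $\mathcal{I}$-Hurewicz property if and only if $X$ has the star-$\mathcal{I}$-Hurewicz property.
   Context: A space is zero-dimensional if it has a base of clopen sets. $St(A,\mathcal{P})=\bigcup\{P\in\mathcal{P}: P\cap A\ne\emptyset\}$. $X$ has the $\mathcal{I}$-Hurewicz property if for each sequence $\langle\mathcal{U}_n\rangle$ of open covers there are finite $\mathcal{V}_n\subseteq\mathcal{U}_n$ with $\{n : x\notin\bigcup\mathcal{V}_n\}\in\mathcal{I}$ for each $x\in X$. $X$ has the star-$\mathcal{I}$-Hurewicz property if for each sequence $\langle\mathcal{U}_n\rangle$ of open covers there are finite $\mathcal{V}_n\subseteq\mathcal{U}_n$ with $\{n : x\notin St(\bigcup\mathcal{V}_n,\mathcal{U}_n)\}\in\mathcal{I}$ for each $x\in X$. *)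

theory Defs
  imports "HOL-Analysis.Analysis"
begin

definition ideal_on_nat :: "nat set set \<Rightarrow> bool" where
  "ideal_on_nat I \<longleftrightarrow> {} \<in> I \<and>
     (\<forall>A B. A \<in> I \<and> B \<subseteq> A \<longrightarrow> B \<in> I) \<and>
     (\<forall>A B. A \<in> I \<and> B \<in> I \<longrightarrow> A \<union> B \<in> I)"

definition proper_ideal :: "nat set set \<Rightarrow> bool" where
  "proper_ideal I \<longleftrightarrow> ideal_on_nat I \<and> (UNIV :: nat set) \<notin> I"

definition admissible_ideal :: "nat set set \<Rightarrow> bool" where
  "admissible_ideal I \<longleftrightarrow> ideal_on_nat I \<and> (\<forall>n. {n} \<in> I)"

definition open_cover :: "'a topology \<Rightarrow> 'a set set \<Rightarrow> bool" where
  "open_cover X \<U> \<longleftrightarrow> (\<forall>U\<in>\<U>. openin X U) \<and> \<Union>\<U> = topspace X"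

definition star :: "'a set \<Rightarrow> 'a set set \<Rightarrow> 'a set" where
  "star A \<P> = \<Union>{P \<in> \<P>. P \<inter> A \<noteq> {}}"

definition zero_dimensional :: "'a topology \<Rightarrow> bool" where
  "zero_dimensional X \<longleftrightarrow> (\<exists>\<B>. (\<forall>B\<in>\<B>. openin X B \<and> closedin X B) \<and>
     (\<forall>U x. openin X U \<and> x \<in> U \<longrightarrow> (\<exists>B\<in>\<B>. x \<in> B \<and> B \<subseteq> U)))"

definition I_Hurewicz :: "nat set set \<Rightarrow> 'a topology \<Rightarrow> bool" where
  "I_Hurewicz I X \<longleftrightarrow> (\<forall>\<U> :: nat \<Rightarrow> 'a set set. (\<forall>n. open_cover X (\<U> n)) \<longrightarrow>
     (\<exists>\<V>. (\<forall>n. finite (\<V> n) \<and> \<V> n \<subseteq> \<U> n) \<and>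
          (\<forall>x\<in>topspace X. {n. x \<notin> \<Union>(\<V> n)} \<in> I)))"

definition star_I_Hurewicz :: "nat set set \<Rightarrow> 'a topology \<Rightarrow> bool" where
  "star_I_Hurewicz I X \<longleftrightarrow> (\<forall>\<U> :: nat \<Rightarrow> 'a set set. (\<forall>n. open_cover X (\<U> n)) \<longrightarrow>
     (\<exists>\<V>. (\<forall>n. finite (\<V> n) \<and> \<V> n \<subseteq> \<U> n) \<and>
          (\<forall>x\<in>topspace X. {n. x \<notin> star (\<Union>(\<V> n)) (\<U> n)} \<in> I)))"

end

theory Submission
  imports Defs
begin

text \<open>A Hurewicz selection \<open>\<V>\<^sub>n \<subseteq> \<U>\<^sub>n\<close> is already a star selection, because
  \<open>\<Union>\<V>\<^sub>n \<subseteq> St(\<Union>\<V>\<^sub>n, \<U>\<^sub>n)\<close>. Conversely, in a zero-dimensional Lindelof space every open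
  cover is refined by a cover of pairwise disjoint open sets: disjointify a countable subcover
  by clopen sets. For a disjoint cover \<open>\<W>\<close> and \<open>\<V> \<subseteq> \<W>\<close> the star \<open>St(\<Union>\<V>, \<W>)\<close> is just
  \<open>\<Union>\<V>\<close>, so a star selection from disjoint refinements \<open>\<W>\<^sub>n\<close> of the \<open>\<U>\<^sub>n\<close> becomes a
  Hurewicz selection once each chosen set is enlarged to a member of \<open>\<U>\<^sub>n\<close> containing it.\<close>

lemma ideal_on_nat_subset:
  assumes "ideal_on_nat I" and "A \<in> I" and "B \<subseteq> A"
  shows "B \<in> I"
  using assms unfolding ideal_on_nat_def by blast

lemma Union_subset_star:
  assumes "\<V> \<subseteq> \<P>"
  shows "\<Union>\<V> \<subseteq> star (\<Union>\<V>) \<P>"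
  using assms unfolding star_def by blast

lemma star_Union_disjoint:
  assumes "disjoint \<P>" and "\<V> \<subseteq> \<P>"
  shows "star (\<Union>\<V>) \<P> = \<Union>\<V>"
proof
  show "star (\<Union>\<V>) \<P> \<subseteq> \<Union>\<V>"
  proof
    fix x assume "x \<in> star (\<Union>\<V>) \<P>"
    then obtain P V where "P \<in> \<P>" "x \<in> P" "V \<in> \<V>" "P \<inter> V \<noteq> {}"
      unfolding star_def by blast
    with assms have "P = V" by (meson disjointD subsetD)
    with \<open>x \<in> P\<close> \<open>V \<in> \<V>\<close> show "x \<in> \<Union>\<V>" by blast
  qed
qed (use assms Union_subset_star in blast)

lemma zero_dimensional_clopen_refinement:
  assumes "zero_dimensional X" and "open_cover X \<U>"
  shows "\<exists>\<C>. (\<forall>C\<in>\<C>. openin X C \<and> closedin X C) \<and> \<Union>\<C> = topspace X \<and>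
    (\<forall>C\<in>\<C>. \<exists>U\<in>\<U>. C \<subseteq> U)"
proof -
  obtain \<B> where clopen: "\<forall>B\<in>\<B>. openin X B \<and> closedin X B"
    and base: "\<forall>U x. openin X U \<and> x \<in> U \<longrightarrow> (\<exists>B\<in>\<B>. x \<in> B \<and> B \<subseteq> U)"
    using assms(1) unfolding zero_dimensional_def by blast
  let ?\<C> = "{B \<in> \<B>. \<exists>U\<in>\<U>. B \<subseteq> U}"
  have "topspace X \<subseteq> \<Union>?\<C>"
  proof
    fix x assume "x \<in> topspace X"
    then obtain U where "U \<in> \<U>" "x \<in> U" "openin X U"
      using assms(2) unfolding open_cover_def by blast
    then obtain B where "B \<in> \<B>" "x \<in> B" "B \<subseteq> U"
      using base by blast
    with \<open>U \<in> \<U>\<close> show "x \<in> \<Union>?\<C>" by blast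
  qed
  moreover have "\<Union>?\<C> \<subseteq> topspace X"
    using clopen openin_subset by blast
  ultimately have "\<Union>?\<C> = topspace X" by (rule antisym[rotated])
  then show ?thesis
    using clopen by (intro exI[of _ ?\<C>]) auto
qed

lemma openin_disjointed:
  assumes "openin X (B n)" and "\<And>i. i < n \<Longrightarrow> closedin X (B i)"
  shows "openin X (disjointed B n)"
  unfolding disjointed_def using assms by (intro openin_diff closedin_Union) auto

lemma zero_dimensional_Lindelof_disjoint_refinement:
  assumes "zero_dimensional X" and "Lindelof_space X" and "open_cover X \<U>"
  shows "\<exists>\<W>. open_cover X \<W> \<and> disjoint \<W> \<and> (\<forall>W\<in>\<W>. \<exists>U\<in>\<U>. W \<subseteq> U)"
proof -
  obtain \<C> where clopen: "\<And>C. C \<in> \<C> \<Longrightarrow> openin X C \<and> closedin X C"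
    and cover: "\<Union>\<C> = topspace X" and refines: "\<And>C. C \<in> \<C> \<Longrightarrow> \<exists>U\<in>\<U>. C \<subseteq> U"
    using zero_dimensional_clopen_refinement[OF assms(1,3)] by metis
  have "\<exists>\<D>. countable \<D> \<and> \<D> \<subseteq> \<C> \<and> \<Union>\<D> = topspace X"
    using clopen cover by (intro Lindelof_spaceD[OF assms(2)]) auto
  then obtain \<D> where "countable \<D>" "\<D> \<subseteq> \<C>" "\<Union>\<D> = topspace X"
    by metis
  show ?thesis
  proof (cases "\<D> = {}")
    case True
    then have "open_cover X {}"
      using \<open>\<Union>\<D> = topspace X\<close> unfolding open_cover_def by simp
    then show ?thesis
      by (intro exI[of _ "{}"]) simp
  next
    case False
    define B where "B = from_nat_into \<D>"
    have "range B = \<D>"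
      unfolding B_def using False \<open>countable \<D>\<close> by (rule range_from_nat_into)
    then have B_\<C>: "B k \<in> \<C>" for k
      using \<open>\<D> \<subseteq> \<C>\<close> by blast
    show ?thesis
    proof (intro exI[of _ "range (disjointed B)"] conjI ballI)
      have "\<Union>(range (disjointed B)) = topspace X"
        using UN_disjointed_eq[of B] \<open>range B = \<D>\<close> \<open>\<Union>\<D> = topspace X\<close> by simp
      moreover have "openin X (disjointed B k)" for k
        using clopen[OF B_\<C>] by (intro openin_disjointed) auto
      ultimately show "open_cover X (range (disjointed B))"
        unfolding open_cover_def by blast
      show "disjoint (range (disjointed B))"
        by (rule disjoint_family_on_disjoint_image[OF disjoint_family_disjointed])
      fix W assume "W \<in> range (disjointed B)"
      then obtain k where "W = disjointed B k"
        by (rule rangeE)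
      then have "W \<subseteq> B k"
        by (simp add: disjointed_subset)
      with refines[OF B_\<C>] show "\<exists>U\<in>\<U>. W \<subseteq> U"
        by (meson order_trans)
    qed
  qed
qed

lemma I_Hurewicz_imp_star_I_Hurewicz:
  assumes "ideal_on_nat I" and "I_Hurewicz I X"
  shows "star_I_Hurewicz I X"
  unfolding star_I_Hurewicz_def
proof (intro allI impI)
  fix \<U> :: "nat \<Rightarrow> 'a set set"
  assume "\<forall>n. open_cover X (\<U> n)"
  then obtain \<V> where \<V>: "\<forall>n. finite (\<V> n) \<and> \<V> n \<subseteq> \<U> n"
    and small: "\<forall>x\<in>topspace X. {n. x \<notin> \<Union>(\<V> n)} \<in> I"
    using assms(2) unfolding I_Hurewicz_def by blast
  have shrink: "{n. x \<notin> star (\<Union>(\<V> n)) (\<U> n)} \<subseteq> {n. x \<notin> \<Union>(\<V> n)}" for x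
    using Union_subset_star \<V> by blast
  show "\<exists>\<V>. (\<forall>n. finite (\<V> n) \<and> \<V> n \<subseteq> \<U> n) \<and>
      (\<forall>x\<in>topspace X. {n. x \<notin> star (\<Union>(\<V> n)) (\<U> n)} \<in> I)"
  proof (intro exI[of _ \<V>] conjI ballI)
    fix x assume "x \<in> topspace X"
    with small show "{n. x \<notin> star (\<Union>(\<V> n)) (\<U> n)} \<in> I"
      using ideal_on_nat_subset[OF assms(1) _ shrink] by blast
  qed (use \<V> in blast)
qed

lemma star_I_Hurewicz_imp_I_Hurewicz:
  assumes "ideal_on_nat I" and "star_I_Hurewicz I X"
    and disjoint_refinement: "\<And>\<U>. open_cover X \<U> \<Longrightarrow>
      \<exists>\<W>. open_cover X \<W> \<and> disjoint \<W> \<and> (\<forall>W\<in>\<W>. \<exists>U\<in>\<U>. W \<subseteq> U)"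
  shows "I_Hurewicz I X"
  unfolding I_Hurewicz_def
proof (intro allI impI)
  fix \<U> :: "nat \<Rightarrow> 'a set set"
  assume "\<forall>n. open_cover X (\<U> n)"
  then have "\<forall>n. \<exists>\<W>. open_cover X \<W> \<and> disjoint \<W> \<and> (\<forall>W\<in>\<W>. \<exists>U\<in>\<U> n. W \<subseteq> U)"
    using disjoint_refinement by blast
  then obtain \<W> where \<W>_cover: "\<And>n. open_cover X (\<W> n)" and \<W>_disjoint: "\<And>n. disjoint (\<W> n)"
    and \<W>_refines: "\<And>n. \<forall>W\<in>\<W> n. \<exists>U\<in>\<U> n. W \<subseteq> U"
    by metis
  obtain \<V> where \<V>: "\<forall>n. finite (\<V> n) \<and> \<V> n \<subseteq> \<W> n"
    and small: "\<forall>x\<in>topspace X. {n. x \<notin> star (\<Union>(\<V> n)) (\<W> n)} \<in> I"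
    using assms(2) \<W>_cover unfolding star_I_Hurewicz_def by blast
  have "\<forall>n W. \<exists>U. W \<in> \<W> n \<longrightarrow> U \<in> \<U> n \<and> W \<subseteq> U"
    using \<W>_refines by blast
  then obtain enlarge where enlarge: "\<And>n W. W \<in> \<W> n \<Longrightarrow> enlarge n W \<in> \<U> n \<and> W \<subseteq> enlarge n W"
    by metis
  define \<V>' where "\<V>' n = enlarge n ` \<V> n" for n
  have "star (\<Union>(\<V> n)) (\<W> n) = \<Union>(\<V> n)" for n
    using \<V> by (intro star_Union_disjoint[OF \<W>_disjoint]) blast
  moreover have "\<Union>(\<V> n) \<subseteq> \<Union>(\<V>' n)" for n
    unfolding \<V>'_def using \<V> enlarge by blast
  ultimately have shrink: "{n. x \<notin> \<Union>(\<V>' n)} \<subseteq> {n. x \<notin> star (\<Union>(\<V> n)) (\<W> n)}" for x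
    by (metis (no_types, lifting) Collect_mono subsetD)
  show "\<exists>\<V>. (\<forall>n. finite (\<V> n) \<and> \<V> n \<subseteq> \<U> n) \<and>
      (\<forall>x\<in>topspace X. {n. x \<notin> \<Union>(\<V> n)} \<in> I)"
  proof (intro exI[of _ \<V>'] conjI allI ballI)
    fix n
    show "finite (\<V>' n)"
      unfolding \<V>'_def using \<V> by simp
    show "\<V>' n \<subseteq> \<U> n"
      unfolding \<V>'_def using \<V> enlarge by blast
  next
    fix x assume "x \<in> topspace X"
    with small show "{n. x \<notin> \<Union>(\<V>' n)} \<in> I"
      using ideal_on_nat_subset[OF assms(1) _ shrink] by blast
  qed
qed

theorem mainTheorem14:
  fixes I :: "nat set set" and X :: "'a topology"
  assumes "proper_ideal I" and "admissible_ideal I"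
    and "zero_dimensional X" and "Lindelof_space X"
  shows "I_Hurewicz I X \<longleftrightarrow> star_I_Hurewicz I X"
proof -
  have ideal: "ideal_on_nat I"
    using assms(1) unfolding proper_ideal_def by blast
  show ?thesis
  proof
    assume "I_Hurewicz I X"
    then show "star_I_Hurewicz I X"
      by (rule I_Hurewicz_imp_star_I_Hurewicz[OF ideal])
  next
    assume "star_I_Hurewicz I X"
    then show "I_Hurewicz I X"
      using zero_dimensional_Lindelof_disjoint_refinement[OF assms(3,4)]
      by (rule star_I_Hurewicz_imp_I_Hurewicz[OF ideal])
  qed
qed

end
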